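(* Let $\mathcal{G}$ be a compact group with normalized Haar measure $\lambda$ acting measurably on $\mathcal{X}$, let $\mathcal{P}$ be a $\mathcal{G}$-invariant distribution on $\mathcal{X}\times\mathcal{Y}$, let $\ell$ be the binary 0-1 loss, let $C>0$, and let $P$ be any distribution on a class $\mathcal{F}$ of functions $\mathcal{X}\to\mathcal{Y}$. Then $$\mathbb{E}_{f\sim P}\Big[\mathbb{E}_{\mathcal{D}^n\sim\mathcal{P}^n}\big[e^{n\mathscr{D}_C(\hat{R}_{\mathrm{aug}}(f,\mathcal{D}^n),R(f))}\big]\Big]\le\mathbb{E}_{f\sim P}\Big[\mathbb{E}_{\mathcal{D}^n\sim\mathcal{P}^n}\big[e^{n\mathscr{D}_C(\hat{R}(f,\mathcal{D}^n),R(f))}\big]\Big]=1$$ and $$\mathbb{E}_{f\sim P}\Big[\mathbb{E}_{\mathcal{D}^n\sim\mathcal{P}^n}\big[e^{n\mathscr{D}_C(\hat{R}^{(m)}_{\mathrm{aug}}(f,\mathcal{D}^n),R(f))}\big]\Big]\le\mathbb{E}_{f\sim P}\Big[\mathbb{E}_{\mathcal{D}^n\sim\mathcal{P}^n}\big[e^{n\mathscr{D}_C(\hat{R}(f,\mathcal{D}^n),R(f))}\big]\Big]=1.$$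
   Context: $\mathcal{P}$ is $\mathcal{G}$-invariant if $(gX,Y)\overset{d}{=}(X,Y)$ for all $g\in\mathcal{G}$. $\mathcal{D}^n=((X_i,Y_i))_{i=1}^n$ i.i.d. from $\mathcal{P}$. $R(f)=\mathbb{E}_{\mathcal{P}}[\ell(f(X),Y)]$, $\hat{R}(f,\mathcal{D}^n)=\frac1n\sum_i\ell(f(X_i),Y_i)$, $\hat{R}_{\mathrm{aug}}(f,\mathcal{D}^n)=\frac1n\sum_i\mathbb{E}_{G\sim\lambda}[\ell(f(GX_i),Y_i)]$, and the Monte Carlo augmented risk is $\hat{R}^{(m)}_{\mathrm{aug}}(f,\mathcal{D}^n)=\frac1{nm}\sum_{i=1}^n\sum_{j=1}^m\ell(f(G_{ij}X_i),Y_i)$ with $(G_{ij})$ i.i.d. from $\lambda$ independent of the data; in the expression involving $\hat{R}^{(m)}_{\mathrm{aug}}$ the inner expectation is taken jointly over $\mathcal{D}^n$ and the $G_{ij}$. For $q,p\in(0,1)$, $\mathscr{D}_C(q,p)=-\log(1-p(1-e^{-C}))-Cq$. *)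

theory Defs
  imports "HOL-Probability.Probability" "HOL-Algebra.Group_Action"
begin

definition compact_group_with_haar ::
  "('g::t2_space, 'b) monoid_scheme \<Rightarrow> 'g measure \<Rightarrow> bool" where
  "compact_group_with_haar Gr lam \<longleftrightarrow>
     group Gr \<and> compact (carrier Gr) \<and>
     continuous_on (carrier Gr \<times> carrier Gr) (\<lambda>(a, b). a \<otimes>\<^bsub>Gr\<^esub> b) \<and>
     continuous_on (carrier Gr) (\<lambda>a. inv\<^bsub>Gr\<^esub> a) \<and>
     prob_space lam \<and> space lam = carrier Gr \<and>
     sets lam = sets (restrict_space borel (carrier Gr)) \<and>
     (\<forall>g\<in>carrier Gr. \<forall>A\<in>sets lam.
        measure lam ((\<lambda>a. g \<otimes>\<^bsub>Gr\<^esub> a) ` A) = measure lam A)"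

definition loss01 :: "bool \<Rightarrow> bool \<Rightarrow> real" where
  "loss01 yhat y = (if yhat = y then 0 else 1)"

definition risk :: "('x \<times> bool) measure \<Rightarrow> ('x \<Rightarrow> bool) \<Rightarrow> real" where
  "risk PP f = (\<integral>z. loss01 (f (fst z)) (snd z) \<partial>PP)"

definition emp_risk :: "nat \<Rightarrow> ('x \<Rightarrow> bool) \<Rightarrow> (nat \<Rightarrow> 'x \<times> bool) \<Rightarrow> real" where
  "emp_risk n f D = (1 / real n) * (\<Sum>i<n. loss01 (f (fst (D i))) (snd (D i)))"

definition aug_risk ::
  "'g measure \<Rightarrow> ('g \<Rightarrow> 'x \<Rightarrow> 'x) \<Rightarrow> nat \<Rightarrow> ('x \<Rightarrow> bool) \<Rightarrow> (nat \<Rightarrow> 'x \<times> bool) \<Rightarrow> real" where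
  "aug_risk lam act n f D =
     (1 / real n) * (\<Sum>i<n. \<integral>g. loss01 (f (act g (fst (D i)))) (snd (D i)) \<partial>lam)"

definition mc_aug_risk ::
  "('g \<Rightarrow> 'x \<Rightarrow> 'x) \<Rightarrow> nat \<Rightarrow> nat \<Rightarrow> ('x \<Rightarrow> bool) \<Rightarrow> (nat \<Rightarrow> 'x \<times> bool)
     \<Rightarrow> (nat \<times> nat \<Rightarrow> 'g) \<Rightarrow> real" where
  "mc_aug_risk act n m f D Gs =
     (1 / (real n * real m)) *
       (\<Sum>i<n. \<Sum>j<m. loss01 (f (act (Gs (i, j)) (fst (D i)))) (snd (D i)))"

definition DC :: "real \<Rightarrow> real \<Rightarrow> real \<Rightarrow> real" where
  "DC C q p = - ln (1 - p * (1 - exp (- C))) - C * q"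

end

theory Submission
  imports Defs
begin

text \<open>With \<open>c = 1 - exp (-C)\<close>, the quantity \<open>1 - c p\<close> is \<open>E exp (-C X)\<close> for \<open>X\<close>
  Bernoulli with mean \<open>p\<close>, and \<open>exp (n D\<^sub>C(q, p)) = exp (-C n q) / (1 - c p)\<^sup>n\<close>. Hence if
  \<open>q\<close> is the average of \<open>n\<close> independent \<open>[0,1]\<close>-valued terms of mean \<open>p\<close>, the expectation of
  \<open>exp (n D\<^sub>C(q, p))\<close> factorises into \<open>n\<close> factors \<open>E exp (-C w) / (1 - c p)\<close>, each at most 1
  because \<open>exp (-C t) \<le> 1 - c t\<close> on \<open>[0,1]\<close> by convexity, with equality for \<open>{0,1}\<close>-valued
  terms. The plain 0-1 loss gives equality. The augmented risk averages the orbit-averaged loss,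
  whose mean is still \<open>R(f)\<close> by invariance of the data distribution and Fubini; the Monte Carlo
  version has mean \<open>R(f)\<close> conditionally on the drawn group elements, and Tonelli integrates
  them out.\<close>

definition bernoulli_exp_moment :: "real \<Rightarrow> real \<Rightarrow> real" where
  "bernoulli_exp_moment C p = 1 - p * (1 - exp (- C))"

lemma exp_neg_mult_le_bernoulli_exp_moment:
  fixes C t :: real
  assumes "0 \<le> t" "t \<le> 1"
  shows "exp (- C * t) \<le> bernoulli_exp_moment C t"
proof -
  have "exp ((1 - t) *\<^sub>R 0 + t *\<^sub>R (- C)) \<le> (1 - t) * exp 0 + t * exp (- C)"
    using convex_onD[OF exp_convex, of t 0 "-C"] assms by simp
  then show ?thesis by (simp add: bernoulli_exp_moment_def algebra_simps)
qed

lemma bernoulli_exp_moment_pos: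
  assumes "0 \<le> p" "p \<le> 1"
  shows "0 < bernoulli_exp_moment C p"
proof -
  have "bernoulli_exp_moment C p = (1 - p) + p * exp (- C)"
    by (simp add: bernoulli_exp_moment_def algebra_simps)
  moreover have "0 < (1 - p) + p * exp (- C)"
    using assms by (cases "p = 1") (auto intro: add_pos_nonneg)
  ultimately show ?thesis by simp
qed

lemma exp_DC_mean:
  fixes w :: "nat \<Rightarrow> real"
  assumes "n > 0" "0 \<le> p" "p \<le> 1"
  shows "exp (real n * DC C ((1 / real n) * (\<Sum>i<n. w i)) p)
       = (\<Prod>i<n. exp (- C * w i) / bernoulli_exp_moment C p)"
proof -
  define a where "a = bernoulli_exp_moment C p"
  have "a > 0" unfolding a_def using assms(2,3) by (rule bernoulli_exp_moment_pos)
  have "real n * DC C ((1 / real n) * (\<Sum>i<n. w i)) p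
      = - C * (real n * ((1 / real n) * (\<Sum>i<n. w i))) - real n * ln a"
    by (simp add: DC_def a_def bernoulli_exp_moment_def algebra_simps)
  also have "\<dots> = (\<Sum>i<n. - C * w i) - real n * ln a"
    using assms(1) by (simp add: sum_distrib_left)
  finally have "exp (real n * DC C ((1 / real n) * (\<Sum>i<n. w i)) p)
      = (\<Prod>i<n. exp (- C * w i)) / a ^ n"
    using \<open>a > 0\<close> by (simp add: exp_diff exp_sum exp_of_nat_mult)
  then show ?thesis by (simp add: prod_dividef a_def)
qed

context prob_space
begin

lemma expectation_unit_interval:
  fixes v :: "'a \<Rightarrow> real"
  assumes "v \<in> borel_measurable M" "\<And>z. z \<in> space M \<Longrightarrow> 0 \<le> v z \<and> v z \<le> 1"
  shows "0 \<le> expectation v" "expectation v \<le> 1"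
proof -
  have "integrable M v"
    by (rule integrable_const_bound[where B=1]) (use assms in auto)
  then show "0 \<le> expectation v" "expectation v \<le> 1"
    using assms(2) by (auto intro!: integral_nonneg_AE integral_le_const AE_I2)
qed

lemma nn_integral_bernoulli_exp_moment_div_eq_1:
  fixes v :: "'a \<Rightarrow> real"
  assumes "v \<in> borel_measurable M" "\<And>z. z \<in> space M \<Longrightarrow> 0 \<le> v z \<and> v z \<le> 1"
    and "expectation v = p"
  shows "(\<integral>\<^sup>+ z. ennreal (bernoulli_exp_moment C (v z) / bernoulli_exp_moment C p) \<partial>M) = 1"
proof -
  define a where "a = bernoulli_exp_moment C p"
  have v_int: "integrable M v"
    by (rule integrable_const_bound[where B=1]) (use assms in auto)
  have "0 \<le> p" "p \<le> 1"
    using expectation_unit_interval[of v] assms by auto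
  then have "a > 0"
    unfolding a_def by (rule bernoulli_exp_moment_pos)
  have "integrable M (\<lambda>z. bernoulli_exp_moment C (v z) / a)"
    using v_int by (simp add: bernoulli_exp_moment_def)
  then have "(\<integral>\<^sup>+ z. ennreal (bernoulli_exp_moment C (v z) / a) \<partial>M)
      = ennreal (\<integral>z. bernoulli_exp_moment C (v z) / a \<partial>M)"
    using assms(2) \<open>a > 0\<close>
    by (intro nn_integral_eq_integral AE_I2)
       (auto intro!: divide_nonneg_pos less_imp_le[OF bernoulli_exp_moment_pos])
  also have "(\<integral>z. bernoulli_exp_moment C (v z) / a \<partial>M) = 1"
    using v_int assms(3) \<open>a > 0\<close> by (simp add: prob_space a_def bernoulli_exp_moment_def)
  finally show ?thesis unfolding a_def by simp
qed

lemma nn_integral_exp_neg_div_le_1: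
  fixes v :: "'a \<Rightarrow> real"
  assumes "v \<in> borel_measurable M" "\<And>z. z \<in> space M \<Longrightarrow> 0 \<le> v z \<and> v z \<le> 1"
    and "expectation v = p"
  shows "(\<integral>\<^sup>+ z. ennreal (exp (- C * v z) / bernoulli_exp_moment C p) \<partial>M) \<le> 1"
proof -
  have "0 \<le> p" "p \<le> 1"
    using expectation_unit_interval[of v] assms by auto
  have "(\<integral>\<^sup>+ z. ennreal (exp (- C * v z) / bernoulli_exp_moment C p) \<partial>M)
      \<le> (\<integral>\<^sup>+ z. ennreal (bernoulli_exp_moment C (v z) / bernoulli_exp_moment C p) \<partial>M)"
    using assms(2) bernoulli_exp_moment_pos[OF \<open>0 \<le> p\<close> \<open>p \<le> 1\<close>, of C]
    by (intro nn_integral_mono ennreal_leI divide_right_mono exp_neg_mult_le_bernoulli_exp_moment)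
       auto
  also have "\<dots> = 1" by (rule nn_integral_bernoulli_exp_moment_div_eq_1[OF assms])
  finally show ?thesis .
qed

lemma nn_integral_exp_neg_div_eq_1:
  fixes v :: "'a \<Rightarrow> real"
  assumes "v \<in> borel_measurable M" "\<And>z. z \<in> space M \<Longrightarrow> v z = 0 \<or> v z = 1"
    and "expectation v = p"
  shows "(\<integral>\<^sup>+ z. ennreal (exp (- C * v z) / bernoulli_exp_moment C p) \<partial>M) = 1"
proof -
  have "(\<integral>\<^sup>+ z. ennreal (exp (- C * v z) / bernoulli_exp_moment C p) \<partial>M)
      = (\<integral>\<^sup>+ z. ennreal (bernoulli_exp_moment C (v z) / bernoulli_exp_moment C p) \<partial>M)"
    using assms(2) by (intro nn_integral_cong) (force simp: bernoulli_exp_moment_def)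
  also have "\<dots> = 1"
    using assms by (intro nn_integral_bernoulli_exp_moment_div_eq_1) force+
  finally show ?thesis .
qed

end

lemma nn_integral_exp_DC_mean_PiM:
  fixes w :: "nat \<Rightarrow> 'z \<Rightarrow> real"
  assumes M: "prob_space M" and "n > 0" "0 \<le> p" "p \<le> 1"
    and w_meas: "\<And>i. i < n \<Longrightarrow> w i \<in> borel_measurable M"
  shows "(\<integral>\<^sup>+ D. ennreal (exp (real n * DC C ((1 / real n) * (\<Sum>i<n. w i (D i))) p))
            \<partial>(\<Pi>\<^sub>M i\<in>{..<n}. M))
       = (\<Prod>i<n. \<integral>\<^sup>+ z. ennreal (exp (- C * w i z) / bernoulli_exp_moment C p) \<partial>M)"
proof -
  interpret product_sigma_finite "\<lambda>_. M"
    unfolding product_sigma_finite_def using M prob_space_imp_sigma_finite by blast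
  have "0 < bernoulli_exp_moment C p" using assms(3,4) by (rule bernoulli_exp_moment_pos)
  then have factorize: "ennreal (exp (real n * DC C ((1 / real n) * (\<Sum>i<n. w i (D i))) p))
      = (\<Prod>i<n. ennreal (exp (- C * w i (D i)) / bernoulli_exp_moment C p))" for D
    unfolding exp_DC_mean[OF assms(2-4)] by (intro prod_ennreal[symmetric]) simp
  have "(\<integral>\<^sup>+ D. ennreal (exp (real n * DC C ((1 / real n) * (\<Sum>i<n. w i (D i))) p))
            \<partial>(\<Pi>\<^sub>M i\<in>{..<n}. M))
      = (\<integral>\<^sup>+ D. (\<Prod>i<n. ennreal (exp (- C * w i (D i)) / bernoulli_exp_moment C p))
            \<partial>(\<Pi>\<^sub>M i\<in>{..<n}. M))"
    by (simp only: factorize)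
  also have "\<dots> = (\<Prod>i<n. \<integral>\<^sup>+ z. ennreal (exp (- C * w i z) / bernoulli_exp_moment C p) \<partial>M)"
  proof (rule product_nn_integral_prod)
    fix i assume "i \<in> {..<n}"
    then have [measurable]: "w i \<in> borel_measurable M" using w_meas by simp
    show "(\<lambda>z. ennreal (exp (- C * w i z) / bernoulli_exp_moment C p)) \<in> borel_measurable M"
      by measurable
  qed simp
  finally show ?thesis .
qed

lemma nn_integral_exp_DC_mean_PiM_le_1:
  fixes w :: "nat \<Rightarrow> 'z \<Rightarrow> real"
  assumes M: "prob_space M" and "n > 0"
    and w_meas: "\<And>i. i < n \<Longrightarrow> w i \<in> borel_measurable M"
    and w01: "\<And>i z. i < n \<Longrightarrow> z \<in> space M \<Longrightarrow> 0 \<le> w i z \<and> w i z \<le> 1"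
    and w_mean: "\<And>i. i < n \<Longrightarrow> (\<integral>z. w i z \<partial>M) = p"
  shows "(\<integral>\<^sup>+ D. ennreal (exp (real n * DC C ((1 / real n) * (\<Sum>i<n. w i (D i))) p))
            \<partial>(\<Pi>\<^sub>M i\<in>{..<n}. M)) \<le> 1"
proof -
  interpret prob_space M by (rule M)
  have "0 \<le> p" "p \<le> 1"
    using expectation_unit_interval[OF w_meas w01] w_mean \<open>n > 0\<close> by auto
  with M \<open>n > 0\<close> w_meas
  have "(\<integral>\<^sup>+ D. ennreal (exp (real n * DC C ((1 / real n) * (\<Sum>i<n. w i (D i))) p))
            \<partial>(\<Pi>\<^sub>M i\<in>{..<n}. M))
       = (\<Prod>i<n. \<integral>\<^sup>+ z. ennreal (exp (- C * w i z) / bernoulli_exp_moment C p) \<partial>M)"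
    by (intro nn_integral_exp_DC_mean_PiM)
  also have "\<dots> \<le> 1"
    by (intro prod_le_1 conjI zero_le nn_integral_exp_neg_div_le_1) (use w_meas w01 w_mean in auto)
  finally show ?thesis .
qed

lemma nn_integral_exp_DC_mean_PiM_eq_1:
  fixes w :: "nat \<Rightarrow> 'z \<Rightarrow> real"
  assumes M: "prob_space M" and "n > 0"
    and w_meas: "\<And>i. i < n \<Longrightarrow> w i \<in> borel_measurable M"
    and w01: "\<And>i z. i < n \<Longrightarrow> z \<in> space M \<Longrightarrow> w i z = 0 \<or> w i z = 1"
    and w_mean: "\<And>i. i < n \<Longrightarrow> (\<integral>z. w i z \<partial>M) = p"
  shows "(\<integral>\<^sup>+ D. ennreal (exp (real n * DC C ((1 / real n) * (\<Sum>i<n. w i (D i))) p))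
            \<partial>(\<Pi>\<^sub>M i\<in>{..<n}. M)) = 1"
proof -
  interpret prob_space M by (rule M)
  have "0 \<le> w 0 z \<and> w 0 z \<le> 1" if "z \<in> space M" for z
    using w01[OF \<open>n > 0\<close> that] by auto
  then have "0 \<le> p" "p \<le> 1"
    using expectation_unit_interval[OF w_meas[OF \<open>n > 0\<close>]] w_mean[OF \<open>n > 0\<close>] by auto
  with M \<open>n > 0\<close> w_meas
  have "(\<integral>\<^sup>+ D. ennreal (exp (real n * DC C ((1 / real n) * (\<Sum>i<n. w i (D i))) p))
            \<partial>(\<Pi>\<^sub>M i\<in>{..<n}. M))
       = (\<Prod>i<n. \<integral>\<^sup>+ z. ennreal (exp (- C * w i z) / bernoulli_exp_moment C p) \<partial>M)"
    by (intro nn_integral_exp_DC_mean_PiM)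
  also have "\<dots> = 1"
    by (intro prod.neutral ballI nn_integral_exp_neg_div_eq_1) (use w_meas w01 w_mean in auto)
  finally show ?thesis .
qed

lemma measurable_loss01 [measurable]:
  "(\<lambda>(a, b). loss01 a b) \<in> borel_measurable (count_space UNIV \<Otimes>\<^sub>M count_space UNIV)"
  unfolding loss01_def by measurable

locale invariant_risk =
  fixes lam :: "'g measure" and MX :: "'x measure" and act :: "'g \<Rightarrow> 'x \<Rightarrow> 'x"
    and PP :: "('x \<times> bool) measure" and f :: "'x \<Rightarrow> bool"
  assumes lam_prob: "prob_space lam"
    and act_meas [measurable]: "(\<lambda>(g, x). act g x) \<in> measurable (lam \<Otimes>\<^sub>M MX) MX"
    and PP_prob: "prob_space PP"
    and PP_sets [measurable_cong]: "sets PP = sets (MX \<Otimes>\<^sub>M count_space UNIV)"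
    and PP_inv: "\<And>g. g \<in> space lam \<Longrightarrow> distr PP PP (\<lambda>(x, y). (act g x, y)) = PP"
    and f_meas [measurable]: "f \<in> measurable MX (count_space UNIV)"
begin

lemma measurable_shift:
  assumes "g \<in> space lam"
  shows "(\<lambda>(x, y). (act g x, y)) \<in> measurable PP PP"
  using assms by measurable

sublocale pair_prob_space PP lam
  using PP_prob lam_prob by (simp add: pair_prob_space_def pair_sigma_finite_def prob_space_imp_sigma_finite)

lemma risk_shift_invariant:
  assumes "g \<in> space lam"
  shows "(\<integral>z. loss01 (f (act g (fst z))) (snd z) \<partial>PP) = risk PP f"
proof -
  have "risk PP f = (\<integral>z. loss01 (f (fst z)) (snd z) \<partial>distr PP PP (\<lambda>(x, y). (act g x, y)))"
    unfolding risk_def PP_inv[OF assms] ..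
  also have "\<dots> = (\<integral>z. loss01 (f (act g (fst z))) (snd z) \<partial>PP)"
    using measurable_shift[OF assms] by (simp add: integral_distr case_prod_beta')
  finally show ?thesis ..
qed

lemma emp_risk_exp_moment_eq_1:
  assumes "n > 0"
  shows "(\<integral>\<^sup>+ D. ennreal (exp (real n * DC C (emp_risk n f D) (risk PP f))) \<partial>(\<Pi>\<^sub>M i\<in>{..<n}. PP)) = 1"
  unfolding emp_risk_def
  by (rule nn_integral_exp_DC_mean_PiM_eq_1[OF PP_prob assms, where w="\<lambda>_ z. loss01 (f (fst z)) (snd z)"])
     (auto simp: loss01_def risk_def)

definition aug_loss :: "'x \<times> bool \<Rightarrow> real" where
  "aug_loss z = (\<integral>g. loss01 (f (act g (fst z))) (snd z) \<partial>lam)"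

lemma measurable_aug_loss [measurable]: "aug_loss \<in> borel_measurable PP"
  unfolding aug_loss_def by measurable

lemma aug_loss_unit_interval:
  assumes "z \<in> space PP"
  shows "0 \<le> aug_loss z \<and> aug_loss z \<le> 1"
proof -
  have [measurable]: "fst z \<in> space MX"
    using assms sets_eq_imp_space_eq[OF PP_sets] by (auto simp: space_pair_measure)
  have "(\<lambda>g. loss01 (f (act g (fst z))) (snd z)) \<in> borel_measurable lam"
    by measurable
  then show ?thesis
    using M2.expectation_unit_interval[of "\<lambda>g. loss01 (f (act g (fst z))) (snd z)"]
    unfolding aug_loss_def by (simp add: loss01_def)
qed

lemma expectation_aug_loss: "(\<integral>z. aug_loss z \<partial>PP) = risk PP f"
proof -
  have "integrable (PP \<Otimes>\<^sub>M lam) (\<lambda>(z, g). loss01 (f (act g (fst z))) (snd z))"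
    by (rule P.integrable_const_bound[where B=1]) (auto simp: loss01_def)
  then have "(\<integral>z. aug_loss z \<partial>PP) = (\<integral>g. (\<integral>z. loss01 (f (act g (fst z))) (snd z) \<partial>PP) \<partial>lam)"
    unfolding aug_loss_def by (rule Fubini_integral[symmetric])
  also have "\<dots> = (\<integral>g. risk PP f \<partial>lam)"
    by (intro Bochner_Integration.integral_cong refl risk_shift_invariant)
  finally show ?thesis by (simp add: M2.prob_space)
qed

lemma aug_risk_exp_moment_le_1:
  assumes "n > 0"
  shows "(\<integral>\<^sup>+ D. ennreal (exp (real n * DC C (aug_risk lam act n f D) (risk PP f))) \<partial>(\<Pi>\<^sub>M i\<in>{..<n}. PP)) \<le> 1"
proof -
  have "aug_risk lam act n f D = (1 / real n) * (\<Sum>i<n. aug_loss (D i))" for D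
    unfolding aug_risk_def aug_loss_def ..
  then show ?thesis
    using nn_integral_exp_DC_mean_PiM_le_1[OF PP_prob assms, where w="\<lambda>_. aug_loss"]
      aug_loss_unit_interval expectation_aug_loss by simp
qed

definition mc_loss :: "nat \<Rightarrow> (nat \<times> nat \<Rightarrow> 'g) \<Rightarrow> nat \<Rightarrow> 'x \<times> bool \<Rightarrow> real" where
  "mc_loss m Gs i z = (1 / real m) * (\<Sum>j<m. loss01 (f (act (Gs (i, j)) (fst z))) (snd z))"

lemma mc_aug_risk_eq: "mc_aug_risk act n m f D Gs = (1 / real n) * (\<Sum>i<n. mc_loss m Gs i (D i))"
  unfolding mc_aug_risk_def mc_loss_def by (simp add: sum_distrib_left)

lemma mc_aug_risk_exp_moment_le_1_given_draws:
  assumes "n > 0" "m > 0" and Gs: "Gs \<in> space (\<Pi>\<^sub>M ij\<in>{..<n} \<times> {..<m}. lam)"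
  shows "(\<integral>\<^sup>+ D. ennreal (exp (real n * DC C (mc_aug_risk act n m f D Gs) (risk PP f)))
           \<partial>(\<Pi>\<^sub>M i\<in>{..<n}. PP)) \<le> 1"
  unfolding mc_aug_risk_eq
proof (rule nn_integral_exp_DC_mean_PiM_le_1[OF PP_prob \<open>n > 0\<close>])
  fix i assume "i < n"
  then have Gs_ij [measurable]: "Gs (i, j) \<in> space lam" if "j < m" for j
    using Gs that by (auto simp: space_PiM)
  show "mc_loss m Gs i \<in> borel_measurable PP"
    unfolding mc_loss_def by measurable
  have "integrable PP (\<lambda>z. loss01 (f (act (Gs (i, j)) (fst z))) (snd z))" if "j < m" for j
    by (rule M1.integrable_const_bound[where B=1]) (use that in \<open>auto simp: loss01_def\<close>)
  then have "(\<integral>z. mc_loss m Gs i z \<partial>PP)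
      = (1 / real m) * (\<Sum>j<m. \<integral>z. loss01 (f (act (Gs (i, j)) (fst z))) (snd z) \<partial>PP)"
    unfolding mc_loss_def by simp
  also have "\<dots> = (1 / real m) * (\<Sum>j<m. risk PP f)"
    by (intro arg_cong[where f="(*) _"] sum.cong refl) (simp add: risk_shift_invariant Gs_ij)
  finally show "(\<integral>z. mc_loss m Gs i z \<partial>PP) = risk PP f"
    using \<open>m > 0\<close> by simp
  fix z
  have "0 \<le> (\<Sum>j<m. loss01 (f (act (Gs (i, j)) (fst z))) (snd z))"
    by (intro sum_nonneg) (simp add: loss01_def)
  moreover have "(\<Sum>j<m. loss01 (f (act (Gs (i, j)) (fst z))) (snd z)) \<le> real m"
    using sum_bounded_above[of "{..<m}" "\<lambda>j. loss01 (f (act (Gs (i, j)) (fst z))) (snd z)" 1]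
    by (simp add: loss01_def)
  ultimately show "0 \<le> mc_loss m Gs i z \<and> mc_loss m Gs i z \<le> 1"
    using \<open>m > 0\<close> unfolding mc_loss_def by simp
qed

lemma mc_aug_risk_exp_moment_le_1:
  assumes "n > 0" "m > 0"
  shows "(\<integral>\<^sup>+ DG. ennreal (exp (real n * DC C (mc_aug_risk act n m f (fst DG) (snd DG)) (risk PP f)))
           \<partial>((\<Pi>\<^sub>M i\<in>{..<n}. PP) \<Otimes>\<^sub>M (\<Pi>\<^sub>M ij\<in>{..<n} \<times> {..<m}. lam))) \<le> 1"
proof -
  let ?MD = "\<Pi>\<^sub>M i\<in>{..<n}. PP" and ?MG = "\<Pi>\<^sub>M ij\<in>{..<n} \<times> {..<m}. lam"
  interpret D: prob_space ?MD by (rule prob_space_PiM) (rule PP_prob)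
  interpret G: prob_space ?MG by (rule prob_space_PiM) (rule lam_prob)
  interpret DG: pair_prob_space ?MD ?MG ..
  have integrand_meas: "(\<lambda>DG. ennreal (exp (real n * DC C (mc_aug_risk act n m f (fst DG) (snd DG)) (risk PP f))))
      \<in> borel_measurable (?MD \<Otimes>\<^sub>M ?MG)"
    unfolding mc_aug_risk_def DC_def by measurable
  have "(\<integral>\<^sup>+ DG. ennreal (exp (real n * DC C (mc_aug_risk act n m f (fst DG) (snd DG)) (risk PP f)))
           \<partial>(?MD \<Otimes>\<^sub>M ?MG))
      = (\<integral>\<^sup>+ Gs. (\<integral>\<^sup>+ D. ennreal (exp (real n * DC C (mc_aug_risk act n m f D Gs) (risk PP f))) \<partial>?MD) \<partial>?MG)"
    using DG.nn_integral_snd[OF integrand_meas] by simp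
  also have "\<dots> \<le> 1"
    using mc_aug_risk_exp_moment_le_1_given_draws[OF assms]
    by (intro G.nn_integral_le_const) (auto intro: AE_I2)
  finally show ?thesis .
qed

end

theorem lemmaA2:
  fixes Gr :: "('g::t2_space, 'b) monoid_scheme"
    and lam :: "'g measure"
    and MX :: "'x measure"
    and act :: "'g \<Rightarrow> 'x \<Rightarrow> 'x"
    and PP :: "('x \<times> bool) measure"
    and P :: "('x \<Rightarrow> bool) measure"
    and C :: real and n m :: nat
  assumes G: "compact_group_with_haar Gr lam"
    and action: "group_action Gr (space MX) act"
    and act_meas: "(\<lambda>(g, x). act g x) \<in> measurable (lam \<Otimes>\<^sub>M MX) MX"
    and PP_prob: "prob_space PP"
    and PP_sets: "sets PP = sets (MX \<Otimes>\<^sub>M count_space UNIV)"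
    and PP_inv: "\<forall>g\<in>carrier Gr. distr PP PP (\<lambda>(x, y). (act g x, y)) = PP"
    and P_prob: "prob_space P"
    and F_meas: "\<forall>f\<in>space P. f \<in> measurable MX (count_space UNIV)"
    and C_pos: "C > 0"
    and n_pos: "n > 0" and m_pos: "m > 0"
  shows
    "(\<integral>\<^sup>+ f. (\<integral>\<^sup>+ D. ennreal (exp (real n * DC C (aug_risk lam act n f D) (risk PP f)))
          \<partial>(\<Pi>\<^sub>M i\<in>{..<n}. PP)) \<partial>P)
     \<le> (\<integral>\<^sup>+ f. (\<integral>\<^sup>+ D. ennreal (exp (real n * DC C (emp_risk n f D) (risk PP f)))
          \<partial>(\<Pi>\<^sub>M i\<in>{..<n}. PP)) \<partial>P)
   \<and> (\<integral>\<^sup>+ f. (\<integral>\<^sup>+ D. ennreal (exp (real n * DC C (emp_risk n f D) (risk PP f)))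
          \<partial>(\<Pi>\<^sub>M i\<in>{..<n}. PP)) \<partial>P) = 1
   \<and> (\<integral>\<^sup>+ f. (\<integral>\<^sup>+ DG. ennreal (exp (real n * DC C (mc_aug_risk act n m f (fst DG) (snd DG)) (risk PP f)))
          \<partial>((\<Pi>\<^sub>M i\<in>{..<n}. PP) \<Otimes>\<^sub>M (\<Pi>\<^sub>M ij\<in>{..<n} \<times> {..<m}. lam))) \<partial>P)
     \<le> (\<integral>\<^sup>+ f. (\<integral>\<^sup>+ D. ennreal (exp (real n * DC C (emp_risk n f D) (risk PP f)))
          \<partial>(\<Pi>\<^sub>M i\<in>{..<n}. PP)) \<partial>P)"
proof -
  interpret P: prob_space P by (rule P_prob)
  have "prob_space lam" "space lam = carrier Gr"
    using G unfolding compact_group_with_haar_def by auto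
  then have risk: "invariant_risk lam MX act PP f" if "f \<in> space P" for f
    unfolding invariant_risk_def using act_meas PP_prob PP_sets PP_inv F_meas that by simp
  have "(\<integral>\<^sup>+ f. (\<integral>\<^sup>+ D. ennreal (exp (real n * DC C (emp_risk n f D) (risk PP f)))
          \<partial>(\<Pi>\<^sub>M i\<in>{..<n}. PP)) \<partial>P) = (\<integral>\<^sup>+ f. 1 \<partial>P)"
    by (intro nn_integral_cong invariant_risk.emp_risk_exp_moment_eq_1[OF risk n_pos])
  then have "(\<integral>\<^sup>+ f. (\<integral>\<^sup>+ D. ennreal (exp (real n * DC C (emp_risk n f D) (risk PP f)))
          \<partial>(\<Pi>\<^sub>M i\<in>{..<n}. PP)) \<partial>P) = 1"
    by (simp add: P.emeasure_space_1)
  moreover have "(\<integral>\<^sup>+ f. (\<integral>\<^sup>+ D. ennreal (exp (real n * DC C (aug_risk lam act n f D) (risk PP f)))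
          \<partial>(\<Pi>\<^sub>M i\<in>{..<n}. PP)) \<partial>P) \<le> 1"
    by (intro P.nn_integral_le_const AE_I2 invariant_risk.aug_risk_exp_moment_le_1[OF risk n_pos]) auto
  moreover have "(\<integral>\<^sup>+ f. (\<integral>\<^sup>+ DG. ennreal (exp (real n * DC C (mc_aug_risk act n m f (fst DG) (snd DG)) (risk PP f)))
          \<partial>((\<Pi>\<^sub>M i\<in>{..<n}. PP) \<Otimes>\<^sub>M (\<Pi>\<^sub>M ij\<in>{..<n} \<times> {..<m}. lam))) \<partial>P) \<le> 1"
    by (intro P.nn_integral_le_const AE_I2 invariant_risk.mc_aug_risk_exp_moment_le_1[OF risk n_pos m_pos])
      auto
  ultimately show ?thesis by simp
qed

end
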